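(* Let $\Delta>1$, $D\le n$, integers $e_0,e_1\ge0$, and let $M\in\mathbb{F}_2^{m\times n}$ satisfy: for all $S_1,S_2\subseteq[n]$ with $|S_2|\le|S_1|\le D$, if $|S_1|/|S_2|>\Delta^2$ then $(M\odot\mathbf{v}(S_1),M\odot\mathbf{v}(S_2))$ are $(e_0+e_1,e_0+e_1)$-far. Let $G=(V,\mathcal{E})$ be the undirected graph with $V=\{A\subseteq[n]:|A|\le D\}$ and $(A,B)\in\mathcal{E}$ iff $(M\odot\mathbf{v}(A),M\odot\mathbf{v}(B))$ are $(e_0+e_1,e_0+e_1)$-close. Then for $A,B\in V$: (i) if $(A,B)\in\mathcal{E}$ and $|A\cup B|\le D$, then $(A\cup B,A)\in\mathcal{E}$ and $(A\cup B,B)\in\mathcal{E}$; (ii) if $\frac{|A|}{|B|}\notin\left[\frac{1}{\Delta^2},\Delta^2\right]$, then $(A,B)\notin\mathcal{E}$.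
   Context: Group testing model: $(M\odot\mathbf{x})_i=\bigvee_{j:M_{ij}=1}\mathbf{x}_j$. $[n]=\{1,\dots,n\}$; for $S\subseteq[n]$, $\mathbf{v}(S)$ is the binary vector with support $S$. For $\mathbf{x},\mathbf{y}\in\mathbb{F}_2^m$, $(\mathbf{x},\mathbf{y})$ is $(a,b)$-far iff $|\mathrm{supp}(\mathbf{y})\setminus\mathrm{supp}(\mathbf{x})|>a$ or $|\mathrm{supp}(\mathbf{x})\setminus\mathrm{supp}(\mathbf{y})|>b$, and $(a,b)$-close otherwise. *)

theory Defs
  imports Complex_Main
begin

text \<open>Binary vectors in F_2^k are modelled as predicates on the index set {1..k};
  a binary m x n matrix M is a predicate on (row, column) with rows in {1..m},
  columns in {1..n}.\<close>

definition vecS :: "nat set \<Rightarrow> nat \<Rightarrow> bool" where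
  "vecS S = (\<lambda>j. j \<in> S)"

definition gt_mult :: "nat \<Rightarrow> (nat \<Rightarrow> nat \<Rightarrow> bool) \<Rightarrow> (nat \<Rightarrow> bool) \<Rightarrow> nat \<Rightarrow> bool" where
  "gt_mult n M x = (\<lambda>i. \<exists>j\<in>{1..n}. M i j \<and> x j)"

definition supp :: "nat \<Rightarrow> (nat \<Rightarrow> bool) \<Rightarrow> nat set" where
  "supp m x = {i \<in> {1..m}. x i}"

definition far :: "nat \<Rightarrow> nat \<Rightarrow> nat \<Rightarrow> (nat \<Rightarrow> bool) \<Rightarrow> (nat \<Rightarrow> bool) \<Rightarrow> bool" where
  "far m a b x y \<longleftrightarrow> card (supp m y - supp m x) > a \<or> card (supp m x - supp m y) > b"

definition close :: "nat \<Rightarrow> nat \<Rightarrow> nat \<Rightarrow> (nat \<Rightarrow> bool) \<Rightarrow> (nat \<Rightarrow> bool) \<Rightarrow> bool" where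
  "close m a b x y \<longleftrightarrow> \<not> far m a b x y"

definition Vset :: "nat \<Rightarrow> nat \<Rightarrow> nat set set" where
  "Vset n D = {A. A \<subseteq> {1..n} \<and> card A \<le> D}"

definition edge :: "nat \<Rightarrow> nat \<Rightarrow> (nat \<Rightarrow> nat \<Rightarrow> bool) \<Rightarrow> nat \<Rightarrow> nat \<Rightarrow> nat \<Rightarrow> nat set \<Rightarrow> nat set \<Rightarrow> bool" where
  "edge m n M D e0 e1 A B \<longleftrightarrow> A \<in> Vset n D \<and> B \<in> Vset n D \<and>
     close m (e0 + e1) (e0 + e1) (gt_mult n M (vecS A)) (gt_mult n M (vecS B))"

end

theory Submission
  imports Defs
begin

text \<open>The test outcome of a union is the bitwise OR of the outcomes, so it has no negatives
  missing from either part, and its positives missing from \<open>A\<close> are exactly those of \<open>B\<close> missing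
  from \<open>A\<close> (and vice versa); this gives (i). For (ii), order the pair so that the larger set comes
  first and apply the hypothesis on \<open>M\<close>.\<close>

lemma gt_mult_vecS_Un:
  "gt_mult n M (vecS (A \<union> B)) i \<longleftrightarrow> gt_mult n M (vecS A) i \<or> gt_mult n M (vecS B) i"
  unfolding gt_mult_def vecS_def by auto

lemma supp_disj: "supp m (\<lambda>i. x i \<or> y i) = supp m x \<union> supp m y"
  unfolding supp_def by auto

lemma far_commute: "far m a a x y \<longleftrightarrow> far m a a y x"
  unfolding far_def by auto

lemma close_disj:
  assumes "close m a b x y"
  shows "close m c a (\<lambda>i. x i \<or> y i) x" and "close m c b (\<lambda>i. x i \<or> y i) y"
proof -
  have diffs: "supp m x \<union> supp m y - supp m x = supp m y - supp m x"
    "supp m x \<union> supp m y - supp m y = supp m x - supp m y"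
    "supp m x - (supp m x \<union> supp m y) = {}" "supp m y - (supp m x \<union> supp m y) = {}"
    by auto
  from assms show "close m c a (\<lambda>i. x i \<or> y i) x" "close m c b (\<lambda>i. x i \<or> y i) y"
    unfolding close_def far_def supp_disj diffs by simp_all
qed

lemma edge_commute: "edge m n M D e0 e1 A B \<longleftrightarrow> edge m n M D e0 e1 B A"
  unfolding edge_def close_def using far_commute by blast

lemma edge_Un:
  assumes "edge m n M D e0 e1 A B" and "card (A \<union> B) \<le> D"
  shows "edge m n M D e0 e1 (A \<union> B) A" and "edge m n M D e0 e1 (A \<union> B) B"
proof -
  have V: "A \<union> B \<in> Vset n D" "A \<in> Vset n D" "B \<in> Vset n D"
    using assms unfolding edge_def Vset_def by auto
  have "close m (e0 + e1) (e0 + e1) (gt_mult n M (vecS A)) (gt_mult n M (vecS B))"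
    using assms(1) unfolding edge_def by blast
  from close_disj[OF this] V show "edge m n M D e0 e1 (A \<union> B) A" "edge m n M D e0 e1 (A \<union> B) B"
    unfolding edge_def gt_mult_vecS_Un[abs_def] by auto
qed

lemma not_edge_if_card_gt:
  fixes \<Delta> :: real
  assumes "\<Delta>\<^sup>2 \<ge> 1"
    and hyp: "\<And>S1 S2. S1 \<subseteq> {1..n} \<Longrightarrow> S2 \<subseteq> {1..n} \<Longrightarrow> card S2 \<le> card S1 \<Longrightarrow> card S1 \<le> D \<Longrightarrow>
        real (card S1) > \<Delta>\<^sup>2 * real (card S2) \<Longrightarrow>
        far m (e0 + e1) (e0 + e1) (gt_mult n M (vecS S1)) (gt_mult n M (vecS S2))"
    and "A \<in> Vset n D" and "B \<in> Vset n D"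
    and gt: "real (card A) > \<Delta>\<^sup>2 * real (card B)"
  shows "\<not> edge m n M D e0 e1 A B"
proof -
  have "real (card B) \<le> \<Delta>\<^sup>2 * real (card B)"
    using assms(1) by (simp add: mult_le_cancel_right1)
  then have "card B \<le> card A" using gt by linarith
  with hyp gt assms(3,4) have "far m (e0 + e1) (e0 + e1) (gt_mult n M (vecS A)) (gt_mult n M (vecS B))"
    unfolding Vset_def by blast
  then show ?thesis unfolding edge_def close_def by blast
qed

theorem lemma2:
  fixes \<Delta> :: real and D n m e0 e1 :: nat and M :: "nat \<Rightarrow> nat \<Rightarrow> bool"
  assumes "\<Delta> > 1" and "D \<le> n"
    and hyp: "\<And>S1 S2. S1 \<subseteq> {1..n} \<Longrightarrow> S2 \<subseteq> {1..n} \<Longrightarrow> card S2 \<le> card S1 \<Longrightarrow> card S1 \<le> D \<Longrightarrow>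
        real (card S1) > \<Delta>\<^sup>2 * real (card S2) \<Longrightarrow>
        far m (e0 + e1) (e0 + e1) (gt_mult n M (vecS S1)) (gt_mult n M (vecS S2))"
    and "A \<in> Vset n D" and "B \<in> Vset n D"
  shows "(edge m n M D e0 e1 A B \<and> card (A \<union> B) \<le> D \<longrightarrow>
            edge m n M D e0 e1 (A \<union> B) A \<and> edge m n M D e0 e1 (A \<union> B) B)
       \<and> (real (card A) > \<Delta>\<^sup>2 * real (card B) \<or> real (card B) > \<Delta>\<^sup>2 * real (card A) \<longrightarrow>
            \<not> edge m n M D e0 e1 A B)"
proof -
  have "\<Delta>\<^sup>2 \<ge> 1" using assms(1) by (simp add: one_le_power)
  then have not_edge: "\<not> edge m n M D e0 e1 X Y"
    if "X \<in> Vset n D" "Y \<in> Vset n D" "real (card X) > \<Delta>\<^sup>2 * real (card Y)" for X Y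
    using hyp that by (rule not_edge_if_card_gt)
  show ?thesis
    using edge_Un[of m n M D e0 e1 A B] not_edge[OF assms(4,5)] not_edge[OF assms(5,4)]
      edge_commute[of m n M D e0 e1 A B] by blast
qed

end
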